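(* Let $M,N,S\ge1$ be integers. Suppose that for every $m\in[M]$, $\{X_{m,n}\}_{n\in[N]}$ are independent Bernoulli random variables, with $\sum_{m\in[M]}\mathbb E[X_{m,n}]=1$ for every $n\in[N]$, and let $\{C_{m,n}\}_{m\in[M],n\in[N]}\subset\mathbb R^S$ be constant vectors with $|C_{m,n}|_1\le C$ for all $m,n$. Then $$\sum_{s=1}^S\sum_{m=1}^M\mathbb E\Big|\sum_{n=1}^NC_{m,n}(s)\big(X_{m,n}-\mathbb E[X_{m,n}]\big)\Big|\le C\sqrt{MNS}.$$
   Context: $[M]=\{1,\dots,M\}$; $C_{m,n}(s)$ is the $s$-th coordinate of $C_{m,n}$; $|\cdot|_1$ is the $L_1$ norm. *)

theory Defs
  imports "HOL-Probability.Probability"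
begin

end

theory Submission
  imports Defs
begin

text \<open>
  Let \<open>p m n\<close> be the mean of \<open>X m n\<close> and \<open>Y m s\<close> the centred sum inside the
  absolute value. Independence kills the cross terms of \<open>E (Y m s)\<^sup>2\<close>, which is therefore
  \<open>\<Sum>n. (Cv m n s)\<^sup>2 p m n (1 - p m n) \<le> \<Sum>n. (Cv m n s)\<^sup>2 p m n\<close>, and
  \<open>E |Y| \<le> sqrt (E Y\<^sup>2)\<close>. Cauchy-Schwarz over the \<open>M S\<close> pairs \<open>(m, s)\<close> bounds
  the left-hand side by \<open>sqrt (M S \<Sum>m s. E (Y m s)\<^sup>2)\<close>. Finally
  \<open>\<Sum>s. (Cv m n s)\<^sup>2 \<le> (\<Sum>s. |Cv m n s|)\<^sup>2 \<le> C\<^sup>2\<close> and \<open>\<Sum>m. p m n = 1\<close> give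
  \<open>\<Sum>m s. E (Y m s)\<^sup>2 \<le> C\<^sup>2 N\<close>.
\<close>

lemma sum_sqrt_le_sqrt_card_mult_sum:
  fixes a :: "'i \<Rightarrow> real"
  assumes "\<And>i. i \<in> A \<Longrightarrow> 0 \<le> a i"
  shows "(\<Sum>i\<in>A. sqrt (a i)) \<le> sqrt (card A * (\<Sum>i\<in>A. a i))"
proof -
  have "(\<Sum>i\<in>A. \<bar>sqrt (a i)\<bar> * \<bar>1\<bar>) \<le> L2_set (\<lambda>i. sqrt (a i)) A * L2_set (\<lambda>_. 1) A"
    by (rule L2_set_mult_ineq)
  moreover have "L2_set (\<lambda>i. sqrt (a i)) A = sqrt (\<Sum>i\<in>A. a i)"
    unfolding L2_set_def using assms by (simp cong: sum.cong)
  ultimately show ?thesis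
    using assms by (simp add: L2_set_constant real_sqrt_mult mult.commute)
qed

lemma sum_power2_le_power2_sum_abs:
  fixes f :: "'i \<Rightarrow> real"
  shows "(\<Sum>i\<in>A. (f i)\<^sup>2) \<le> (\<Sum>i\<in>A. \<bar>f i\<bar>)\<^sup>2"
proof -
  have "L2_set f A \<le> (\<Sum>i\<in>A. \<bar>f i\<bar>)" by (rule L2_set_le_sum_abs)
  hence "(L2_set f A)\<^sup>2 \<le> (\<Sum>i\<in>A. \<bar>f i\<bar>)\<^sup>2" by (simp add: power_mono)
  thus ?thesis by (simp add: L2_set_def sum_nonneg)
qed

context prob_space
begin

lemma expectation_abs_le_sqrt_second_moment:
  fixes X :: "'a \<Rightarrow> real"
  assumes "integrable M X" "integrable M (\<lambda>x. (X x)\<^sup>2)"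
  shows "expectation (\<lambda>x. \<bar>X x\<bar>) \<le> sqrt (expectation (\<lambda>x. (X x)\<^sup>2))"
proof -
  have "0 \<le> variance (\<lambda>x. \<bar>X x\<bar>)" by (rule variance_positive)
  also have "variance (\<lambda>x. \<bar>X x\<bar>) = expectation (\<lambda>x. (X x)\<^sup>2) - (expectation (\<lambda>x. \<bar>X x\<bar>))\<^sup>2"
    using variance_eq[of "\<lambda>x. \<bar>X x\<bar>"] assms by simp
  finally show ?thesis by (simp add: real_le_rsqrt)
qed

lemma
  fixes X :: "'a \<Rightarrow> real"
  assumes "X \<in> borel_measurable M" "AE x in M. X x \<in> {0, 1}"
  shows integrable_bernoulli: "integrable M X"
    and square_integrable_bernoulli: "integrable M (\<lambda>x. (X x)\<^sup>2)"
    and expectation_bernoulli_nonneg: "0 \<le> expectation X"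
    and variance_bernoulli_le: "variance X \<le> expectation X"
proof -
  show int: "integrable M X"
    by (rule integrable_const_bound[where B=1]) (use assms in auto)
  have sq: "AE x in M. (X x)\<^sup>2 = X x"
    using assms(2) by eventually_elim auto
  show int2: "integrable M (\<lambda>x. (X x)\<^sup>2)"
    using integrable_cong_AE[OF _ _ sq] int assms(1) by simp
  show "0 \<le> expectation X"
    by (rule integral_nonneg_AE) (use assms(2) in auto)
  have "expectation (\<lambda>x. (X x)\<^sup>2) = expectation X"
    by (rule integral_cong_AE) (use assms(1) sq in auto)
  thus "variance X \<le> expectation X"
    using variance_eq[OF int int2] by simp
qed

lemma
  fixes X :: "'i \<Rightarrow> 'a \<Rightarrow> real"
  assumes fin: "finite I" and indep: "indep_vars (\<lambda>_. borel) X I"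
    and int: "\<And>i. i \<in> I \<Longrightarrow> integrable M (X i)"
    and int2: "\<And>i. i \<in> I \<Longrightarrow> integrable M (\<lambda>x. (X i x)\<^sup>2)"
  shows integrable_square_sum_centered_indep:
      "integrable M (\<lambda>x. (\<Sum>i\<in>I. c i * (X i x - expectation (X i)))\<^sup>2)"
    and second_moment_sum_centered_indep:
      "expectation (\<lambda>x. (\<Sum>i\<in>I. c i * (X i x - expectation (X i)))\<^sup>2)
         = (\<Sum>i\<in>I. (c i)\<^sup>2 * variance (X i))"
proof -
  define Z where "Z = (\<lambda>i x. X i x - expectation (X i))"
  have intZ: "integrable M (Z i)" "expectation (Z i) = 0" if "i \<in> I" for i
    using int[OF that] by (simp_all add: Z_def prob_space)
  have indepZ: "indep_vars (\<lambda>_. borel) Z I"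
    unfolding Z_def by (rule indep_vars_compose2[OF indep]) simp
  have diag: "integrable M (\<lambda>x. Z i x * Z i x)"
      "expectation (\<lambda>x. Z i x * Z i x) = variance (X i)" if "i \<in> I" for i
  proof -
    have "(\<lambda>x. Z i x * Z i x)
        = (\<lambda>x. (X i x)\<^sup>2 - 2 * expectation (X i) * X i x + (expectation (X i))\<^sup>2)"
      by (auto simp: Z_def power2_eq_square algebra_simps)
    then show "integrable M (\<lambda>x. Z i x * Z i x)"
      using int[OF that] int2[OF that] by simp
    show "expectation (\<lambda>x. Z i x * Z i x) = variance (X i)"
      by (simp add: Z_def power2_eq_square)
  qed
  have cross: "integrable M (\<lambda>x. Z i x * Z j x)"
      "expectation (\<lambda>x. Z i x * Z j x) = 0" if "i \<in> I" "j \<in> I" "i \<noteq> j" for i j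
  proof -
    have indep2: "indep_vars (\<lambda>_. borel) Z {i, j}"
      by (rule indep_vars_subset[OF indepZ]) (use that in auto)
    have "integrable M (\<lambda>x. \<Prod>k\<in>{i, j}. Z k x)"
      "expectation (\<lambda>x. \<Prod>k\<in>{i, j}. Z k x) = (\<Prod>k\<in>{i, j}. expectation (Z k))"
      using indep_vars_integrable[OF _ indep2] indep_vars_lebesgue_integral[OF _ indep2] intZ that
      by auto
    with intZ that show "integrable M (\<lambda>x. Z i x * Z j x)"
      "expectation (\<lambda>x. Z i x * Z j x) = 0"
      by simp_all
  qed
  have sq: "(\<lambda>x. (\<Sum>i\<in>I. c i * (X i x - expectation (X i)))\<^sup>2)
      = (\<lambda>x. \<Sum>i\<in>I. \<Sum>j\<in>I. c i * c j * (Z i x * Z j x))"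
    by (auto simp: power2_eq_square sum_product Z_def algebra_simps)
  have intZZ: "integrable M (\<lambda>x. Z i x * Z j x)" if "i \<in> I" "j \<in> I" for i j
    using diag(1) cross(1) that by (cases "i = j") auto
  then show "integrable M (\<lambda>x. (\<Sum>i\<in>I. c i * (X i x - expectation (X i)))\<^sup>2)"
    unfolding sq by (auto intro!: integrable_sum)
  have "expectation (\<lambda>x. \<Sum>i\<in>I. \<Sum>j\<in>I. c i * c j * (Z i x * Z j x))
      = (\<Sum>i\<in>I. \<Sum>j\<in>I. c i * c j * expectation (\<lambda>x. Z i x * Z j x))"
    using intZZ by (simp add: integrable_sum)
  also have "\<dots> = (\<Sum>i\<in>I. \<Sum>j\<in>I. c i * c j * (if i = j then variance (X i) else 0))"
    by (intro sum.cong refl) (simp add: diag cross)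
  also have "\<dots> = (\<Sum>i\<in>I. (c i)\<^sup>2 * variance (X i))"
    using fin by (simp add: if_distrib[of "\<lambda>v. _ * v"] power2_eq_square cong: if_cong)
  finally show "expectation (\<lambda>x. (\<Sum>i\<in>I. c i * (X i x - expectation (X i)))\<^sup>2)
      = (\<Sum>i\<in>I. (c i)\<^sup>2 * variance (X i))"
    unfolding sq .
qed

lemma expectation_abs_sum_centered_bernoulli_le:
  fixes X :: "'i \<Rightarrow> 'a \<Rightarrow> real"
  assumes fin: "finite I" and indep: "indep_vars (\<lambda>_. borel) X I"
    and bern: "\<And>i. i \<in> I \<Longrightarrow> AE x in M. X i x \<in> {0, 1}"
  shows "expectation (\<lambda>x. \<bar>\<Sum>i\<in>I. c i * (X i x - expectation (X i))\<bar>)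
           \<le> sqrt (\<Sum>i\<in>I. (c i)\<^sup>2 * expectation (X i))"
proof -
  have rv: "X i \<in> borel_measurable M" if "i \<in> I" for i
    using indep that unfolding indep_vars_def by auto
  note int = integrable_bernoulli[OF rv bern] square_integrable_bernoulli[OF rv bern]
  have "expectation (\<lambda>x. \<bar>\<Sum>i\<in>I. c i * (X i x - expectation (X i))\<bar>)
      \<le> sqrt (expectation (\<lambda>x. (\<Sum>i\<in>I. c i * (X i x - expectation (X i)))\<^sup>2))"
    using fin indep int
    by (intro expectation_abs_le_sqrt_second_moment integrable_square_sum_centered_indep) auto
  also have "\<dots> = sqrt (\<Sum>i\<in>I. (c i)\<^sup>2 * variance (X i))"
    using fin indep int by (simp add: second_moment_sum_centered_indep)
  also have "\<dots> \<le> sqrt (\<Sum>i\<in>I. (c i)\<^sup>2 * expectation (X i))"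
    using variance_bernoulli_le[OF rv bern]
    by (intro real_sqrt_le_mono sum_mono mult_left_mono) auto
  finally show ?thesis .
qed

end

lemma weighted_sum_power2_le:
  fixes c :: "'j \<Rightarrow> 'i \<Rightarrow> 's \<Rightarrow> real" and p :: "'j \<Rightarrow> 'i \<Rightarrow> real"
  assumes "\<And>m n. m \<in> J \<Longrightarrow> n \<in> I \<Longrightarrow> 0 \<le> p m n"
    and "\<And>m n. m \<in> J \<Longrightarrow> n \<in> I \<Longrightarrow> (\<Sum>s\<in>T. \<bar>c m n s\<bar>) \<le> C"
  shows "(\<Sum>s\<in>T. \<Sum>m\<in>J. \<Sum>n\<in>I. (c m n s)\<^sup>2 * p m n) \<le> C\<^sup>2 * (\<Sum>m\<in>J. \<Sum>n\<in>I. p m n)"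
proof -
  have "(\<Sum>s\<in>T. \<Sum>m\<in>J. \<Sum>n\<in>I. (c m n s)\<^sup>2 * p m n)
      = (\<Sum>m\<in>J. \<Sum>n\<in>I. p m n * (\<Sum>s\<in>T. (c m n s)\<^sup>2))"
    by (simp add: sum.swap[of _ T] sum.swap[of _ T I] sum_distrib_left mult.commute)
  also have "\<dots> \<le> (\<Sum>m\<in>J. \<Sum>n\<in>I. p m n * C\<^sup>2)"
  proof (intro sum_mono mult_left_mono)
    fix m n assume mn: "m \<in> J" "n \<in> I"
    then show "0 \<le> p m n" by (rule assms(1))
    have "(\<Sum>s\<in>T. \<bar>c m n s\<bar>)\<^sup>2 \<le> C\<^sup>2"
      using assms(2)[OF mn] by (intro power_mono) (auto intro: sum_nonneg)
    with sum_power2_le_power2_sum_abs show "(\<Sum>s\<in>T. (c m n s)\<^sup>2) \<le> C\<^sup>2"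
      by (rule order_trans)
  qed
  finally show ?thesis by (simp add: sum_distrib_left sum_distrib_right mult.commute)
qed

theorem lemma5:
  fixes P :: "'a measure"
    and X :: "nat \<Rightarrow> nat \<Rightarrow> 'a \<Rightarrow> real"
    and Cv :: "nat \<Rightarrow> nat \<Rightarrow> nat \<Rightarrow> real"
    and C :: real
    and M N S :: nat
  assumes "prob_space P"
    and "M \<ge> 1" and "N \<ge> 1" and "S \<ge> 1"
    and rv: "\<And>m n. m \<in> {1..M} \<Longrightarrow> n \<in> {1..N} \<Longrightarrow> X m n \<in> borel_measurable P"
    and bern: "\<And>m n. m \<in> {1..M} \<Longrightarrow> n \<in> {1..N} \<Longrightarrow>
                 AE \<omega> in P. X m n \<omega> \<in> {0, 1}"
    and indep: "\<And>m. m \<in> {1..M} \<Longrightarrow>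
                 prob_space.indep_vars P (\<lambda>_. borel) (\<lambda>n. X m n) {1..N}"
    and sum1: "\<And>n. n \<in> {1..N} \<Longrightarrow>
                 (\<Sum>m=1..M. prob_space.expectation P (X m n)) = 1"
    and bound: "\<And>m n. m \<in> {1..M} \<Longrightarrow> n \<in> {1..N} \<Longrightarrow>
                 (\<Sum>s=1..S. \<bar>Cv m n s\<bar>) \<le> C"
  shows "(\<Sum>s=1..S. \<Sum>m=1..M. prob_space.expectation P
            (\<lambda>\<omega>. \<bar>\<Sum>n=1..N. Cv m n s * (X m n \<omega> - prob_space.expectation P (X m n))\<bar>))
         \<le> C * sqrt (real M * real N * real S)"
proof -
  interpret prob_space P by fact
  define a where "a m s = (\<Sum>n=1..N. (Cv m n s)\<^sup>2 * expectation (X m n))" for m s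
  have mean_nonneg: "0 \<le> expectation (X m n)" if "m \<in> {1..M}" "n \<in> {1..N}" for m n
    using rv[OF that] bern[OF that] by (rule expectation_bernoulli_nonneg)
  have a_nonneg: "0 \<le> a m s" if "m \<in> {1..M}" for m s
    unfolding a_def using mean_nonneg that by (auto intro: sum_nonneg)
  have C_nonneg: "0 \<le> C"
    by (rule order_trans[OF sum_nonneg bound[of 1 1]]) (use assms(2,3) in auto)
  have "(\<Sum>s=1..S. \<Sum>m=1..M. expectation
            (\<lambda>\<omega>. \<bar>\<Sum>n=1..N. Cv m n s * (X m n \<omega> - expectation (X m n))\<bar>))
      \<le> (\<Sum>s=1..S. \<Sum>m=1..M. sqrt (a m s))"
    unfolding a_def using indep bern
    by (intro sum_mono expectation_abs_sum_centered_bernoulli_le) auto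
  also have "\<dots> \<le> sqrt (real (S * M) * (\<Sum>s=1..S. \<Sum>m=1..M. a m s))"
    using sum_sqrt_le_sqrt_card_mult_sum[of "{1..S} \<times> {1..M}" "\<lambda>(s, m). a m s"] a_nonneg
    by (simp add: sum.cartesian_product split_def mem_Times_iff)
  also have "\<dots> \<le> sqrt (real (S * M) * (C\<^sup>2 * (\<Sum>m=1..M. \<Sum>n=1..N. expectation (X m n))))"
    unfolding a_def using mean_nonneg bound
    by (intro real_sqrt_le_mono mult_left_mono weighted_sum_power2_le) auto
  also have "(\<Sum>m=1..M. \<Sum>n=1..N. expectation (X m n)) = N"
    using sum1 by (subst sum.swap) simp
  also have "sqrt (real (S * M) * (C\<^sup>2 * N)) = C * sqrt (real M * real N * real S)"
    using C_nonneg by (simp add: real_sqrt_mult mult_ac)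
  finally show ?thesis .
qed

end
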